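(* Let $\varphi,\gamma\in(0,1)$ with $\varphi+\gamma\ge1$, $\alpha=\min\{\varphi,\gamma\}$. For each $N$, let $(X^{(N)}_t)_t$ be a process on $\{0,1\}^N$ whose transition from $t-1$ to $t$ is generated from a driving variable $Z^{(N)}_t$ (time-homogeneous, with exchangeable coordinates) by the rule: $(U(t,k))$ i.i.d. Uniform$(0,1)$ and, independently for each $k$, if $Z_t[k]=1$ then $X_t[k]=1$ iff $X_{t-1}[k]=0$ or ($X_{t-1}[k]=1$ and $U(t,k)\ge\bar\varphi/\gamma$); if $Z_t[k]=0$ and $\varphi\le\gamma$ then $X_t[k]=0$ iff $X_{t-1}[k]=0$ or ($X_{t-1}[k]=1$ and $U(t,k)\ge\varphi/\gamma$); if $Z_t[k]=0$ and $\varphi>\gamma$ then $X_t[k]=1$ iff $X_{t-1}[k]=1$ or ($X_{t-1}[k]=0$ and $U(t,k)\ge\bar\varphi/\bar\gamma$). Suppose $\|Z^{(N)}_t\|/N\to\Theta_t$, a random variable in $[0,1]$. Let $N_{i\cdot}=|\{k:X_{t-1}[k]=i\}|$ and $N_{ij}=|\{k:X_{t-1}[k]=i,X_t[k]=j\}|$, and set $q_{01}=1-\bar\theta\bar\varphi/\bar\alpha$, $q_{11}=(\alpha\bar\theta+\theta(\varphi+\gamma-1))/\gamma$. Then, conditional on $N_{0\cdot},N_{1\cdot}$ and $\Theta_t=\theta$, as $N_{0\cdot},N_{1\cdot}\to\infty$, $$V_{01}=\frac{N_{01}-N_{0\cdot}q_{01}}{N_{0\cdot}^{1/2}},\qquad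 V_{11}=\frac{N_{11}-N_{1\cdot}q_{11}}{N_{1\cdot}^{1/2}}$$ converge in distribution to independent Normal random variables with means $0$ and variances $q_{01}\bar q_{01}$ and $q_{11}\bar q_{11}$ respectively.
   Context: $\bar a=1-a$; $\|\boldsymbol{z}\|$ is the number of ones of $\boldsymbol{z}\in\{0,1\}^N$. *)

theory Defs
  imports "HOL-Probability.Probability"
begin

text \<open>Bits are booleans: True = 1, False = 0.\<close>

definition step :: "real \<Rightarrow> real \<Rightarrow> bool \<Rightarrow> bool \<Rightarrow> real \<Rightarrow> bool" where
  "step \<phi> \<gamma> xo z u =
     (if z then (\<not> xo \<or> (xo \<and> u \<ge> (1 - \<phi>) / \<gamma>))
      else if \<phi> \<le> \<gamma> then \<not> (\<not> xo \<or> (xo \<and> u \<ge> \<phi> / \<gamma>))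
      else (xo \<or> (\<not> xo \<and> u \<ge> (1 - \<phi>) / (1 - \<gamma>))))"

text \<open>Per coordinate, conditionally on Theta = theta: Z[k] ~ Bernoulli(theta),
  U(t,k) ~ Uniform(0,1), independent.\<close>
definition coord_meas :: "real \<Rightarrow> (bool \<times> real) measure" where
  "coord_meas \<theta> = measure_pmf (bernoulli_pmf \<theta>) \<Otimes>\<^sub>M uniform_measure lborel {0..1}"

definition trans_space :: "real \<Rightarrow> nat \<Rightarrow> (nat \<Rightarrow> bool \<times> real) measure" where
  "trans_space \<theta> N = PiM {..<N} (\<lambda>_. coord_meas \<theta>)"

definition cnt0 :: "(nat \<Rightarrow> bool) \<Rightarrow> nat \<Rightarrow> nat" where
  "cnt0 x N = card {k \<in> {..<N}. \<not> x k}"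

definition cnt1 :: "(nat \<Rightarrow> bool) \<Rightarrow> nat \<Rightarrow> nat" where
  "cnt1 x N = card {k \<in> {..<N}. x k}"

text \<open>N_{01} and N_{11}, given X_{t-1} = x (on coordinates k < N).\<close>
definition cnt01 :: "real \<Rightarrow> real \<Rightarrow> (nat \<Rightarrow> bool) \<Rightarrow> nat \<Rightarrow> (nat \<Rightarrow> bool \<times> real) \<Rightarrow> nat" where
  "cnt01 \<phi> \<gamma> x N \<omega> = card {k \<in> {..<N}. \<not> x k \<and> step \<phi> \<gamma> (x k) (fst (\<omega> k)) (snd (\<omega> k))}"

definition cnt11 :: "real \<Rightarrow> real \<Rightarrow> (nat \<Rightarrow> bool) \<Rightarrow> nat \<Rightarrow> (nat \<Rightarrow> bool \<times> real) \<Rightarrow> nat" where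
  "cnt11 \<phi> \<gamma> x N \<omega> = card {k \<in> {..<N}. x k \<and> step \<phi> \<gamma> (x k) (fst (\<omega> k)) (snd (\<omega> k))}"

definition q01 :: "real \<Rightarrow> real \<Rightarrow> real \<Rightarrow> real" where
  "q01 \<phi> \<gamma> \<theta> = 1 - (1 - \<theta>) * (1 - \<phi>) / (1 - min \<phi> \<gamma>)"

definition q11 :: "real \<Rightarrow> real \<Rightarrow> real \<Rightarrow> real" where
  "q11 \<phi> \<gamma> \<theta> = (min \<phi> \<gamma> * (1 - \<theta>) + \<theta> * (\<phi> + \<gamma> - 1)) / \<gamma>"

definition V01 :: "real \<Rightarrow> real \<Rightarrow> real \<Rightarrow> (nat \<Rightarrow> bool) \<Rightarrow> nat \<Rightarrow> (nat \<Rightarrow> bool \<times> real) \<Rightarrow> real" where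
  "V01 \<phi> \<gamma> \<theta> x N \<omega> =
     (real (cnt01 \<phi> \<gamma> x N \<omega>) - real (cnt0 x N) * q01 \<phi> \<gamma> \<theta>) / sqrt (real (cnt0 x N))"

definition V11 :: "real \<Rightarrow> real \<Rightarrow> real \<Rightarrow> (nat \<Rightarrow> bool) \<Rightarrow> nat \<Rightarrow> (nat \<Rightarrow> bool \<times> real) \<Rightarrow> real" where
  "V11 \<phi> \<gamma> \<theta> x N \<omega> =
     (real (cnt11 \<phi> \<gamma> x N \<omega>) - real (cnt1 x N) * q11 \<phi> \<gamma> \<theta>) / sqrt (real (cnt1 x N))"

text \<open>Normal law with mean m and variance v (v = 0: point mass at m).\<close>
definition normal_meas :: "real \<Rightarrow> real \<Rightarrow> real measure" where
  "normal_meas m v = (if v = 0 then return borel m else density lborel (normal_density m (sqrt v)))"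

definition weak_conv_meas :: "(nat \<Rightarrow> 'a::topological_space measure) \<Rightarrow> 'a measure \<Rightarrow> bool" where
  "weak_conv_meas Ms M \<longleftrightarrow>
     (\<forall>f :: 'a \<Rightarrow> real. continuous_on UNIV f \<longrightarrow> bounded (range f) \<longrightarrow>
        (\<lambda>n. \<integral>y. f y \<partial>Ms n) \<longlonglongrightarrow> (\<integral>y. f y \<partial>M))"

end

theory Submission
  imports Defs
begin

text \<open>Given X_{t-1} = x and Theta_t = theta, the pairs (Z_t[k], U(t,k)) are i.i.d., so N_01 and N_11
  are sums of i.i.d. Bernoulli indicators over the disjoint blocks where x is 0 and where x is 1,
  and integrating the transition rule shows that the success probabilities are q_01 and q_11.
  Functions of disjoint blocks of an independent family are independent, so already for each N the
  law of (V_01, V_11) is the product of the laws of two normalized binomial counts. Each factor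
  converges to the normal law by the central limit theorem (or is the point mass at 0 when
  q(1 - q) = 0), and Skorohod's representation theorem together with dominated convergence turns
  weak convergence of the two factors into weak convergence of their product.\<close>

section \<open>Blocks of independent coordinates\<close>

lemma indep_vars_PiM_components:
  assumes M: "\<And>i. i \<in> I \<Longrightarrow> prob_space (M i)"
  shows "prob_space.indep_vars (PiM I M) M (\<lambda>i \<omega>. \<omega> i) I"
proof -
  interpret P: prob_space "PiM I M"
    using M by (intro prob_space_PiM)
  show ?thesis
  proof (cases "I = {}")
    case True
    then show ?thesis
      unfolding P.indep_vars_def P.indep_sets_def by auto
  next
    case False
    have "distr (PiM I M) (PiM I M) (\<lambda>\<omega>. \<lambda>i\<in>I. \<omega> i) = distr (PiM I M) (PiM I M) (\<lambda>\<omega>. \<omega>)"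
      by (intro distr_cong) (auto simp: space_PiM PiE_def extensional_restrict)
    also have "\<dots> = (\<Pi>\<^sub>M i\<in>I. distr (PiM I M) (M i) (\<lambda>\<omega>. \<omega> i))"
      using M by (auto intro!: PiM_cong distr_PiM_component[symmetric])
    finally show ?thesis
      using False by (subst P.indep_vars_iff_distr_eq_PiM') auto
  qed
qed

lemma distr_PiM_component_comp:
  assumes "\<And>i. i \<in> I \<Longrightarrow> prob_space (M i)" "i \<in> I" "f \<in> measurable (M i) N"
  shows "distr (PiM I M) N (\<lambda>\<omega>. f (\<omega> i)) = distr (M i) N f"
  using distr_distr[OF assms(3) measurable_component_singleton[OF assms(2), where M=M]]
    distr_PiM_component[where I=I and M=M and i=i, OF assms(1,2)]
  by (simp add: comp_def)

lemma integral_PiM_component: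
  fixes f :: "'a \<Rightarrow> real"
  assumes "\<And>i. i \<in> I \<Longrightarrow> prob_space (M i)" "i \<in> I" "f \<in> borel_measurable (M i)"
  shows "(\<integral>\<omega>. f (\<omega> i) \<partial>PiM I M) = (\<integral>x. f x \<partial>M i)"
  using integral_distr[OF measurable_component_singleton[OF assms(2), where M=M] assms(3)]
    distr_PiM_component[where I=I and M=M and i=i, OF assms(1,2)]
  by simp

lemma distr_PiM_block_sum:
  fixes f :: "'c \<Rightarrow> real" and h :: "real \<Rightarrow> real" and A I :: "'i set"
  assumes C: "prob_space C" and [measurable]: "f \<in> borel_measurable C" "h \<in> borel_measurable borel"
    and A: "A \<subseteq> I" "finite A"
  shows "distr (PiM I (\<lambda>_. C)) borel (\<lambda>\<omega>. h (\<Sum>k\<in>A. f (\<omega> k)))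
       = distr (PiM UNIV (\<lambda>_::nat. C)) borel (\<lambda>\<omega>. h (\<Sum>i<card A. f (\<omega> i)))"
proof -
  obtain e where e: "bij_betw e {..<card A} A"
    using ex_bij_betw_nat_finite[OF A(2)] by (auto simp: atLeast0LessThan)
  define H where "H = (\<lambda>\<omega>. h (\<Sum>i<card A. f (\<omega> i)))"
  have [measurable]: "H \<in> borel_measurable (PiM {..<card A} (\<lambda>_. C))"
    unfolding H_def by measurable
  have [measurable]: "(\<lambda>\<omega>. \<lambda>i\<in>{..<card A}. \<omega> (e i)) \<in> measurable (PiM I (\<lambda>_. C)) (PiM {..<card A} (\<lambda>_. C))"
    using e A by (intro measurable_restrict measurable_component_singleton) (auto simp: bij_betw_def)
  have [measurable]: "(\<lambda>\<omega>. \<lambda>i\<in>{..<card A}. \<omega> i) \<in> measurable (PiM UNIV (\<lambda>_. C)) (PiM {..<card A} (\<lambda>_. C))"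
    by (intro measurable_restrict measurable_component_singleton) auto
  have block: "distr (PiM I (\<lambda>_. C)) (PiM {..<card A} (\<lambda>_. C)) (\<lambda>\<omega>. \<lambda>i\<in>{..<card A}. \<omega> (e i))
      = PiM {..<card A} (\<lambda>_. C)"
    using distr_PiM_reindex[of I "\<lambda>_. C" e "{..<card A}"] C e A by (auto simp: bij_betw_def)
  have initial: "distr (PiM UNIV (\<lambda>_. C)) (PiM {..<card A} (\<lambda>_. C)) (\<lambda>\<omega>. \<lambda>i\<in>{..<card A}. \<omega> i)
      = PiM {..<card A} (\<lambda>_. C)"
    using distr_PiM_reindex[of UNIV "\<lambda>_. C" "\<lambda>i. i" "{..<card A}"] C by auto
  have "distr (PiM I (\<lambda>_. C)) borel (\<lambda>\<omega>. h (\<Sum>k\<in>A. f (\<omega> k)))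
      = distr (PiM I (\<lambda>_. C)) borel (H \<circ> (\<lambda>\<omega>. \<lambda>i\<in>{..<card A}. \<omega> (e i)))"
    by (intro distr_cong) (simp_all add: H_def flip: sum.reindex_bij_betw[OF e])
  also have "\<dots> = distr (PiM {..<card A} (\<lambda>_. C)) borel H"
    by (subst distr_distr[where N="PiM {..<card A} (\<lambda>_. C)", symmetric]) (simp_all add: block)
  also have "\<dots> = distr (PiM UNIV (\<lambda>_. C)) borel (H \<circ> (\<lambda>\<omega>. \<lambda>i\<in>{..<card A}. \<omega> i))"
    by (subst distr_distr[where N="PiM {..<card A} (\<lambda>_. C)", symmetric]) (simp_all add: initial)
  also have "\<dots> = distr (PiM UNIV (\<lambda>_. C)) borel (\<lambda>\<omega>. h (\<Sum>i<card A. f (\<omega> i)))"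
    by (intro distr_cong) (simp_all add: H_def)
  finally show ?thesis .
qed

lemma distr_PiM_disjoint_block_sums:
  fixes f g :: "'c \<Rightarrow> real" and h1 h2 :: "real \<Rightarrow> real" and A B I :: "'i set"
  assumes C: "prob_space C" and [measurable]: "f \<in> borel_measurable C" "g \<in> borel_measurable C"
    "h1 \<in> borel_measurable borel" "h2 \<in> borel_measurable borel"
    and AB: "A \<subseteq> I" "B \<subseteq> I" "A \<inter> B = {}"
  shows "distr (PiM I (\<lambda>_. C)) borel (\<lambda>\<omega>. (h1 (\<Sum>k\<in>A. f (\<omega> k)), h2 (\<Sum>k\<in>B. g (\<omega> k))))
    = distr (PiM I (\<lambda>_. C)) borel (\<lambda>\<omega>. h1 (\<Sum>k\<in>A. f (\<omega> k)))
      \<Otimes>\<^sub>M distr (PiM I (\<lambda>_. C)) borel (\<lambda>\<omega>. h2 (\<Sum>k\<in>B. g (\<omega> k)))"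
proof -
  interpret P: prob_space "PiM I (\<lambda>_. C)"
    using C by (intro prob_space_PiM)
  have "P.indep_var (PiM A (\<lambda>_. C)) (\<lambda>\<omega>. restrict \<omega> A) (PiM B (\<lambda>_. C)) (\<lambda>\<omega>. restrict \<omega> B)"
    using P.indep_var_restrict[OF indep_vars_PiM_components AB(3,1,2)] C by simp
  then have "P.indep_var borel ((\<lambda>\<omega>. h1 (\<Sum>k\<in>A. f (\<omega> k))) \<circ> (\<lambda>\<omega>. restrict \<omega> A))
      borel ((\<lambda>\<omega>. h2 (\<Sum>k\<in>B. g (\<omega> k))) \<circ> (\<lambda>\<omega>. restrict \<omega> B))"
    by (rule P.indep_var_compose) measurable
  then have "P.indep_var borel (\<lambda>\<omega>. h1 (\<Sum>k\<in>A. f (\<omega> k))) borel (\<lambda>\<omega>. h2 (\<Sum>k\<in>B. g (\<omega> k)))"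
    by (simp add: comp_def cong: sum.cong)
  then show ?thesis
    unfolding P.indep_var_distribution_eq borel_prod by simp
qed

lemma real_distribution_normal_meas:
  assumes "0 \<le> v"
  shows "real_distribution (normal_meas m v)"
  using assms unfolding normal_meas_def real_distribution_def real_distribution_axioms_def
  by (simp add: prob_space_return prob_space_normal_density)

lemma distr_std_normal_mult:
  assumes "0 < \<sigma>"
  shows "distr std_normal_distribution borel (\<lambda>x. \<sigma> * x) = normal_meas 0 (\<sigma>\<^sup>2)"
proof -
  interpret real_distribution std_normal_distribution
    by (rule real_dist_normal_dist)
  have "distributed std_normal_distribution lborel (\<lambda>x. x) (normal_density 0 1)"
    unfolding distributed_def by (simp add: distr_id2)
  from normal_density_affine[OF this, of \<sigma> 0] assms
  have "distributed std_normal_distribution lborel (\<lambda>x. \<sigma> * x) (normal_density 0 \<sigma>)"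
    by simp
  then show ?thesis
    using assms unfolding distributed_def normal_meas_def by (simp cong: distr_cong)
qed

lemma (in prob_space) variance_of_bool:
  assumes "Measurable.pred M P"
  shows "variance (\<lambda>x. of_bool (P x) :: real)
    = expectation (\<lambda>x. of_bool (P x)) * (1 - expectation (\<lambda>x. of_bool (P x)))"
proof -
  define q where "q = expectation (\<lambda>x. of_bool (P x) :: real)"
  have integrable: "integrable M (\<lambda>x. of_bool (P x) :: real)"
    using assms by (intro integrable_const_bound[where B=1]) auto
  have "variance (\<lambda>x. of_bool (P x) :: real) = expectation (\<lambda>x. of_bool (P x) * (1 - 2 * q) + q\<^sup>2)"
    unfolding q_def[symmetric] by (intro Bochner_Integration.integral_cong) (auto simp: power2_eq_square algebra_simps)
  also have "\<dots> = q * (1 - q)"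
    using integrable by (simp add: q_def[symmetric] prob_space power2_eq_square algebra_simps)
  finally show ?thesis
    unfolding q_def .
qed

lemma (in prob_space) expectation_of_bool_mult_compl_nonneg:
  assumes "Measurable.pred M P"
  shows "0 \<le> expectation (\<lambda>x. of_bool (P x) :: real) * (1 - expectation (\<lambda>x. of_bool (P x)))"
proof -
  have "0 \<le> variance (\<lambda>x. of_bool (P x) :: real)"
    by (intro integral_nonneg_AE AE_I2) simp
  then show ?thesis
    by (simp add: variance_of_bool[OF assms])
qed

section \<open>Weak convergence of products\<close>

lemma weak_conv_m_reindex:
  assumes "weak_conv_m \<mu> M" "filterlim r at_top sequentially"
  shows "weak_conv_m (\<lambda>n. \<mu> (r n)) M"
  using assms filterlim_compose[of "\<lambda>n. cdf (\<mu> n) _" _ sequentially r]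
  unfolding weak_conv_m_def weak_conv_def by blast

lemma weak_conv_m_distr_continuous:
  assumes conv: "weak_conv_m \<mu> M" and \<mu>: "\<And>n. real_distribution (\<mu> n)"
    and M: "real_distribution M" and g: "continuous_on UNIV g"
  shows "weak_conv_m (\<lambda>n. distr (\<mu> n) borel g) (distr M borel g)"
proof -
  have [measurable]: "g \<in> borel_measurable borel"
    using g by (rule borel_measurable_continuous_onI)
  have g_meas: "g \<in> borel_measurable N" if "real_distribution N" for N
    unfolding measurable_cong_sets[OF real_distribution.events_eq_borel[OF that] refl] by measurable
  have distr_g: "real_distribution (distr N borel g)" if "real_distribution N" for N
    using prob_space.real_distribution_distr[OF _ g_meas] that by (simp add: real_distribution_def)
  show ?thesis
  proof (rule integral_bdd_continuous_conv_imp_weak_conv)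
    fix f :: "real \<Rightarrow> real"
    assume f: "\<And>x. isCont f x" "\<And>x. \<bar>f x\<bar> \<le> 1"
    then have [measurable]: "f \<in> borel_measurable borel"
      by (intro borel_measurable_continuous_onI continuous_at_imp_continuous_on) auto
    have "isCont (f \<circ> g) x" for x
      using f(1) g by (intro continuous_intros) (auto simp: continuous_on_eq_continuous_at)
    then have "(\<lambda>n. \<integral>x. f (g x) \<partial>\<mu> n) \<longlonglongrightarrow> (\<integral>x. f (g x) \<partial>M)"
      using weak_conv_imp_integral_bdd_continuous_conv[OF \<mu> M conv, of "f \<circ> g" 1] f(2)
      by (simp add: comp_def)
    then show "(\<lambda>n. \<integral>x. f x \<partial>distr (\<mu> n) borel g) \<longlonglongrightarrow> (\<integral>x. f x \<partial>distr M borel g)"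
      using \<mu> M g_meas by (simp add: integral_distr)
  qed (use \<mu> M distr_g in auto)
qed

lemma integral_pair_measure_distr:
  fixes f :: "real \<times> real \<Rightarrow> real"
  assumes "prob_space \<Omega>1" "prob_space \<Omega>2"
    and [measurable]: "Y1 \<in> borel_measurable \<Omega>1" "Y2 \<in> borel_measurable \<Omega>2"
      "f \<in> borel_measurable borel"
  shows "(\<integral>z. f z \<partial>(distr \<Omega>1 borel Y1 \<Otimes>\<^sub>M distr \<Omega>2 borel Y2))
    = (\<integral>z. f (Y1 (fst z), Y2 (snd z)) \<partial>(\<Omega>1 \<Otimes>\<^sub>M \<Omega>2))"
proof -
  interpret pair_prob_space \<Omega>1 \<Omega>2
    using assms(1,2) by (simp add: pair_prob_space_def pair_sigma_finite_def prob_space_imp_sigma_finite)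
  have "distr \<Omega>1 borel Y1 \<Otimes>\<^sub>M distr \<Omega>2 borel Y2
      = distr (\<Omega>1 \<Otimes>\<^sub>M \<Omega>2) (borel \<Otimes>\<^sub>M borel) (\<lambda>(x, y). (Y1 x, Y2 y))"
    by (intro pair_measure_distr prob_space_imp_sigma_finite prob_space.prob_space_distr assms)
  then show ?thesis
    by (simp add: integral_distr borel_prod case_prod_beta)
qed

lemma tendsto_integral_pair_measure_distr:
  fixes f :: "real \<times> real \<Rightarrow> real"
  assumes \<Omega>: "prob_space \<Omega>1" "prob_space \<Omega>2"
    and [measurable]: "\<And>n. Y1s n \<in> borel_measurable \<Omega>1" "Y1 \<in> borel_measurable \<Omega>1"
      "\<And>n. Y2s n \<in> borel_measurable \<Omega>2" "Y2 \<in> borel_measurable \<Omega>2"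
    and lim1: "\<And>\<omega>. \<omega> \<in> space \<Omega>1 \<Longrightarrow> (\<lambda>n. Y1s n \<omega>) \<longlonglongrightarrow> Y1 \<omega>"
    and lim2: "\<And>\<omega>. \<omega> \<in> space \<Omega>2 \<Longrightarrow> (\<lambda>n. Y2s n \<omega>) \<longlonglongrightarrow> Y2 \<omega>"
    and f_cont: "continuous_on UNIV f" and f_bound: "\<And>z. \<bar>f z\<bar> \<le> B"
  shows "(\<lambda>n. \<integral>z. f z \<partial>(distr \<Omega>1 borel (Y1s n) \<Otimes>\<^sub>M distr \<Omega>2 borel (Y2s n)))
    \<longlonglongrightarrow> (\<integral>z. f z \<partial>(distr \<Omega>1 borel Y1 \<Otimes>\<^sub>M distr \<Omega>2 borel Y2))"
proof -
  interpret pair_prob_space \<Omega>1 \<Omega>2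
    using \<Omega> by (simp add: pair_prob_space_def pair_sigma_finite_def prob_space_imp_sigma_finite)
  have [measurable]: "f \<in> borel_measurable borel"
    using f_cont by (rule borel_measurable_continuous_onI)
  have "(\<lambda>n. \<integral>z. f (Y1s n (fst z), Y2s n (snd z)) \<partial>(\<Omega>1 \<Otimes>\<^sub>M \<Omega>2))
      \<longlonglongrightarrow> (\<integral>z. f (Y1 (fst z), Y2 (snd z)) \<partial>(\<Omega>1 \<Otimes>\<^sub>M \<Omega>2))"
  proof (rule integral_dominated_convergence[where w="\<lambda>_. B"])
    show "AE z in \<Omega>1 \<Otimes>\<^sub>M \<Omega>2. (\<lambda>n. f (Y1s n (fst z), Y2s n (snd z))) \<longlonglongrightarrow> f (Y1 (fst z), Y2 (snd z))"
    proof (rule AE_I2)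
      fix z
      assume "z \<in> space (\<Omega>1 \<Otimes>\<^sub>M \<Omega>2)"
      then have "(\<lambda>n. (Y1s n (fst z), Y2s n (snd z))) \<longlonglongrightarrow> (Y1 (fst z), Y2 (snd z))"
        using lim1 lim2 by (auto simp: space_pair_measure intro!: tendsto_Pair)
      then show "(\<lambda>n. f (Y1s n (fst z), Y2s n (snd z))) \<longlonglongrightarrow> f (Y1 (fst z), Y2 (snd z))"
        using f_cont by (intro isCont_tendsto_compose[of _ f]) (auto simp: continuous_on_eq_continuous_at)
    qed
    show "AE z in \<Omega>1 \<Otimes>\<^sub>M \<Omega>2. norm (f (Y1s n (fst z), Y2s n (snd z))) \<le> B" for n
      using f_bound by (intro AE_I2) simp
    show "integrable (\<Omega>1 \<Otimes>\<^sub>M \<Omega>2) (\<lambda>_. B)"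
      by simp
    show "(\<lambda>z. f (Y1 (fst z), Y2 (snd z))) \<in> borel_measurable (\<Omega>1 \<Otimes>\<^sub>M \<Omega>2)"
      by measurable
    show "(\<lambda>z. f (Y1s n (fst z), Y2s n (snd z))) \<in> borel_measurable (\<Omega>1 \<Otimes>\<^sub>M \<Omega>2)" for n
      by measurable
  qed
  then show ?thesis
    by (simp add: integral_pair_measure_distr[OF \<Omega>])
qed

lemma weak_conv_meas_pair_measure:
  assumes \<mu>: "\<And>n. real_distribution (\<mu> n)" "real_distribution M" "weak_conv_m \<mu> M"
    and \<nu>: "\<And>n. real_distribution (\<nu> n)" "real_distribution N" "weak_conv_m \<nu> N"
  shows "weak_conv_meas (\<lambda>n. \<mu> n \<Otimes>\<^sub>M \<nu> n) (M \<Otimes>\<^sub>M N)"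
proof -
  obtain \<Omega>1 :: "real measure" and Y1s Y1 where \<Omega>1: "prob_space \<Omega>1"
    and Y1s: "\<And>n. Y1s n \<in> borel_measurable \<Omega>1" "\<And>n. distr \<Omega>1 borel (Y1s n) = \<mu> n"
    and Y1: "Y1 \<in> measurable \<Omega>1 lborel" "distr \<Omega>1 borel Y1 = M"
    and lim1: "\<And>\<omega>. \<omega> \<in> space \<Omega>1 \<Longrightarrow> (\<lambda>n. Y1s n \<omega>) \<longlonglongrightarrow> Y1 \<omega>"
    using Skorohod[OF \<mu>] by blast
  obtain \<Omega>2 :: "real measure" and Y2s Y2 where \<Omega>2: "prob_space \<Omega>2"
    and Y2s: "\<And>n. Y2s n \<in> borel_measurable \<Omega>2" "\<And>n. distr \<Omega>2 borel (Y2s n) = \<nu> n"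
    and Y2: "Y2 \<in> measurable \<Omega>2 lborel" "distr \<Omega>2 borel Y2 = N"
    and lim2: "\<And>\<omega>. \<omega> \<in> space \<Omega>2 \<Longrightarrow> (\<lambda>n. Y2s n \<omega>) \<longlonglongrightarrow> Y2 \<omega>"
    using Skorohod[OF \<nu>] by blast
  have Y_meas: "Y1 \<in> borel_measurable \<Omega>1" "Y2 \<in> borel_measurable \<Omega>2"
    using Y1(1) Y2(1) by simp_all
  show ?thesis
    unfolding weak_conv_meas_def
  proof (intro allI impI)
    fix f :: "real \<times> real \<Rightarrow> real"
    assume f_cont: "continuous_on UNIV f" and "bounded (range f)"
    then obtain B where "\<And>z. \<bar>f z\<bar> \<le> B"
      unfolding bounded_iff by auto
    from tendsto_integral_pair_measure_distr[OF \<Omega>1 \<Omega>2 Y1s(1) Y_meas(1) Y2s(1) Y_meas(2) lim1 lim2 f_cont this]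
    show "(\<lambda>n. \<integral>z. f z \<partial>(\<mu> n \<Otimes>\<^sub>M \<nu> n)) \<longlonglongrightarrow> (\<integral>z. f z \<partial>(M \<Otimes>\<^sub>M N))"
      unfolding Y1s(2) Y2s(2) Y1(2) Y2(2) .
  qed
qed

section \<open>Central limit theorem for Bernoulli counts\<close>

definition normalized_count :: "('c \<Rightarrow> bool) \<Rightarrow> real \<Rightarrow> nat \<Rightarrow> (nat \<Rightarrow> 'c) \<Rightarrow> real" where
  "normalized_count P q m \<omega> = ((\<Sum>i<m. of_bool (P (\<omega> i))) - real m * q) / sqrt (real m)"

lemma measurable_normalized_count [measurable]:
  assumes [measurable]: "Measurable.pred C P"
  shows "normalized_count P q m \<in> borel_measurable (PiM UNIV (\<lambda>_. C))"
  unfolding normalized_count_def by measurable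

lemma distr_normalized_count_degenerate:
  assumes C: "prob_space C" and [measurable]: "Measurable.pred C P"
    and q: "q = (\<integral>c. of_bool (P c) \<partial>C)" and degenerate: "q * (1 - q) = 0"
  shows "distr (PiM UNIV (\<lambda>_::nat. C)) borel (normalized_count P q m) = normal_meas 0 (q * (1 - q))"
proof -
  interpret C: prob_space C
    by (rule C)
  have "AE c in C. (of_bool (P c) - q)\<^sup>2 = 0"
    using C.variance_of_bool[of P] degenerate
    by (subst integral_nonneg_eq_0_iff_AE[symmetric]) (auto simp: q intro!: C.integrable_const_bound[where B=1])
  then have "AE c in C. of_bool (P c) = q"
    by eventually_elim simp
  then have "AE \<omega> in PiM UNIV (\<lambda>_::nat. C). \<forall>i. of_bool (P (\<omega> i)) = q"
    unfolding AE_all_countable using C by (intro allI AE_PiM_component) simp_all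
  then have "AE \<omega> in PiM UNIV (\<lambda>_. C). normalized_count P q m \<omega> = 0"
    by eventually_elim (simp add: normalized_count_def)
  then have "distr (PiM UNIV (\<lambda>_. C)) borel (normalized_count P q m) = distr (PiM UNIV (\<lambda>_::nat. C)) borel (\<lambda>_. 0)"
    by (rule distr_cong_AE[OF refl refl]) simp_all
  also have "\<dots> = return borel 0"
    using C by (intro prob_space.distr_const prob_space_PiM) simp_all
  finally show ?thesis
    using degenerate by (simp add: normal_meas_def)
qed

lemma weak_conv_m_normalized_count_nondegenerate:
  assumes C: "prob_space C" and [measurable]: "Measurable.pred C P"
    and q: "q = (\<integral>c. of_bool (P c) \<partial>C)" and nondegenerate: "0 < q * (1 - q)"
  shows "weak_conv_m (\<lambda>m. distr (PiM UNIV (\<lambda>_::nat. C)) borel (normalized_count P q m))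
    (normal_meas 0 (q * (1 - q)))"
proof -
  interpret PI: prob_space "PiM UNIV (\<lambda>_::nat. C)"
    using C by (intro prob_space_PiM)
  define X where "X = (\<lambda>i (\<omega> :: nat \<Rightarrow> 'a). of_bool (P (\<omega> i)) :: real)"
  have [measurable]: "X i \<in> borel_measurable (PiM UNIV (\<lambda>_. C))" for i
    unfolding X_def by measurable
  have distr_X: "distr (PiM UNIV (\<lambda>_. C)) borel (X i) = distr C borel (\<lambda>c. of_bool (P c))" for i
    unfolding X_def using C by (intro distr_PiM_component_comp) simp_all
  have mean_X: "PI.expectation (X i) = q" for i
    unfolding X_def q using C by (intro integral_PiM_component) simp_all
  have var_X: "PI.variance (X i) = q * (1 - q)" for i
    using PI.variance_of_bool[of "\<lambda>\<omega>. P (\<omega> i)"] mean_X[of i] by (simp add: X_def)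
  have "PI.indep_vars (\<lambda>_. C) (\<lambda>i \<omega>. \<omega> i) UNIV"
    using indep_vars_PiM_components[of UNIV "\<lambda>_. C"] C by simp
  then have indep: "PI.indep_vars (\<lambda>_. borel) X UNIV"
    unfolding X_def by (rule PI.indep_vars_compose2) simp
  define \<sigma> where "\<sigma> = sqrt (q * (1 - q))"
  have \<sigma>: "0 < \<sigma>" "\<sigma>\<^sup>2 = q * (1 - q)"
    using nondegenerate by (simp_all add: \<sigma>_def)
  have "weak_conv_m (\<lambda>m. distr (PiM UNIV (\<lambda>_. C)) borel (\<lambda>\<omega>. (\<Sum>i<m. X i \<omega> - q) / sqrt (real m * \<sigma>\<^sup>2)))
      std_normal_distribution"
    using var_X \<sigma>(2) PI.central_limit_theorem[OF indep mean_X \<sigma>(1) _ _ distr_X]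
    by (simp add: X_def PI.integrable_const_bound[where B=1])
  then have "weak_conv_m
      (\<lambda>m. distr (distr (PiM UNIV (\<lambda>_. C)) borel (\<lambda>\<omega>. (\<Sum>i<m. X i \<omega> - q) / sqrt (real m * \<sigma>\<^sup>2))) borel ((*) \<sigma>))
      (distr std_normal_distribution borel ((*) \<sigma>))"
    by (rule weak_conv_m_distr_continuous) (simp_all add: real_dist_normal_dist continuous_on_mult_left)
  moreover have "\<sigma> * ((\<Sum>i<m. X i \<omega> - q) / sqrt (real m * \<sigma>\<^sup>2)) = normalized_count P q m \<omega>" for m \<omega>
    using \<sigma>(1) by (simp add: X_def normalized_count_def sum_subtractf real_sqrt_mult del: sum_of_bool_eq)
  ultimately show ?thesis
    using \<sigma> by (simp add: distr_distr comp_def distr_std_normal_mult)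
qed

lemma weak_conv_m_normalized_count:
  assumes "prob_space C" "Measurable.pred C P" "q = (\<integral>c. of_bool (P c) \<partial>C)"
  shows "weak_conv_m (\<lambda>m. distr (PiM UNIV (\<lambda>_::nat. C)) borel (normalized_count P q m))
    (normal_meas 0 (q * (1 - q)))"
proof -
  have "0 \<le> q * (1 - q)"
    unfolding assms(3) by (rule prob_space.expectation_of_bool_mult_compl_nonneg[OF assms(1,2)])
  then consider "q * (1 - q) = 0" | "0 < q * (1 - q)"
    by fastforce
  then show ?thesis
  proof cases
    case 1
    then show ?thesis
      using distr_normalized_count_degenerate[OF assms] by (simp add: weak_conv_m_def weak_conv_def)
  next
    case 2
    then show ?thesis
      by (rule weak_conv_m_normalized_count_nondegenerate[OF assms])
  qed
qed

section \<open>The transition rule\<close>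

lemma prob_space_coord_meas: "prob_space (coord_meas \<theta>)"
  unfolding coord_meas_def
  by (intro prob_space_pair prob_space_measure_pmf prob_space_uniform_measure) auto

lemma measurable_step [measurable]:
  "(\<lambda>c. step \<phi> \<gamma> b (fst c) (snd c)) \<in> measurable (coord_meas \<theta>) (count_space UNIV)"
proof -
  have "sets (coord_meas \<theta>) = sets (count_space UNIV \<Otimes>\<^sub>M (borel :: real measure))"
    unfolding coord_meas_def by (intro sets_pair_measure_cong) auto
  then show ?thesis
    unfolding measurable_cong_sets[OF _ refl] step_def by measurable
qed

lemma integral_uniform_ge:
  assumes "0 \<le> c" "c \<le> 1"
  shows "(\<integral>u. of_bool (c \<le> u) \<partial>uniform_measure lborel {0..1::real}) = 1 - c"
proof -
  have "(\<integral>u. of_bool (c \<le> u) \<partial>uniform_measure lborel {0..1::real})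
      = (\<integral>u. indicator {c..} u \<partial>uniform_measure lborel {0..1::real})"
    by (intro Bochner_Integration.integral_cong) (auto simp: indicator_def)
  also have "\<dots> = measure (uniform_measure lborel {0..1::real}) {c..}"
    by simp
  also have "\<dots> = 1 - c"
    using assms by (simp add: Int_commute atLeastAtMost_def[symmetric])
  finally show ?thesis .
qed

lemma integral_uniform_less:
  assumes "0 \<le> c" "c \<le> 1"
  shows "(\<integral>u. of_bool (\<not> c \<le> u) \<partial>uniform_measure lborel {0..1::real}) = c"
proof -
  interpret prob_space "uniform_measure lborel {0..1::real}"
    by (intro prob_space_uniform_measure) auto
  have "(\<integral>u. of_bool (\<not> c \<le> u) \<partial>uniform_measure lborel {0..1::real})
      = (\<integral>u. 1 - of_bool (c \<le> u) \<partial>uniform_measure lborel {0..1::real})"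
    by (intro Bochner_Integration.integral_cong) auto
  also have "\<dots> = c"
    using assms integral_uniform_ge[OF assms]
    by (subst Bochner_Integration.integral_diff) (auto intro!: integrable_const_bound[where B=1])
  finally show ?thesis .
qed

lemma integral_uniform_one: "(\<integral>u. 1 \<partial>uniform_measure lborel {0..1::real}) = (1::real)"
proof -
  interpret prob_space "uniform_measure lborel {0..1::real}"
    by (intro prob_space_uniform_measure) auto
  show ?thesis
    by simp
qed

lemma integral_coord_meas_of_bool:
  assumes "0 \<le> \<theta>" "\<theta> \<le> 1" and [measurable]: "Measurable.pred (coord_meas \<theta>) P"
  shows "(\<integral>c. of_bool (P c) \<partial>coord_meas \<theta>) =
    \<theta> * (\<integral>u. of_bool (P (True, u)) \<partial>uniform_measure lborel {0..1::real})
    + (1 - \<theta>) * (\<integral>u. of_bool (P (False, u)) \<partial>uniform_measure lborel {0..1::real})"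
proof -
  interpret U: prob_space "uniform_measure lborel {0..1::real}"
    by (intro prob_space_uniform_measure) auto
  interpret pair_sigma_finite "measure_pmf (bernoulli_pmf \<theta>)" "uniform_measure lborel {0..1::real}"
    by unfold_locales
  have "integrable (coord_meas \<theta>) (\<lambda>c. of_bool (P c) :: real)"
    using prob_space_coord_meas[of \<theta>]
    by (intro finite_measure.integrable_const_bound[where B=1]) (auto simp: prob_space_def)
  then have "(\<integral>c. of_bool (P c) \<partial>coord_meas \<theta>)
      = ((\<integral>z. (\<integral>u. of_bool (P (z, u)) \<partial>uniform_measure lborel {0..1::real}) \<partial>bernoulli_pmf \<theta>) :: real)"
    unfolding coord_meas_def by (rule integral_fst'[of "\<lambda>c. of_bool (P c)", symmetric])
  also have "\<dots> = (\<Sum>z\<in>UNIV. pmf (bernoulli_pmf \<theta>) z *\<^sub>R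
      (\<integral>u. of_bool (P (z, u)) \<partial>uniform_measure lborel {0..1::real}))"
    by (subst integral_measure_pmf[where A=UNIV]) auto
  finally show ?thesis
    using assms(1,2) by (simp add: UNIV_bool)
qed

lemma integral_step_False_eq_q01:
  assumes "0 < \<phi>" "\<phi> < 1" "0 < \<gamma>" "\<gamma> < 1" "0 \<le> \<theta>" "\<theta> \<le> 1"
  shows "(\<integral>c. of_bool (step \<phi> \<gamma> False (fst c) (snd c)) \<partial>coord_meas \<theta>) = q01 \<phi> \<gamma> \<theta>"
proof -
  have mix: "(\<integral>c. of_bool (step \<phi> \<gamma> False (fst c) (snd c)) \<partial>coord_meas \<theta>) =
    \<theta> * (\<integral>u. of_bool (step \<phi> \<gamma> False True u) \<partial>uniform_measure lborel {0..1::real})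
    + (1 - \<theta>) * (\<integral>u. of_bool (step \<phi> \<gamma> False False u) \<partial>uniform_measure lborel {0..1::real})"
    using integral_coord_meas_of_bool[OF assms(5,6) measurable_step] by simp
  show ?thesis
  proof (cases "\<phi> \<le> \<gamma>")
    case True
    then show ?thesis
      unfolding mix using assms by (simp add: step_def q01_def min_def integral_uniform_one)
  next
    case False
    then have "(1 - \<phi>) / (1 - \<gamma>) \<le> 1"
      using assms by (simp add: divide_le_eq_1)
    then have "(\<integral>u. of_bool ((1 - \<phi>) / (1 - \<gamma>) \<le> u) \<partial>uniform_measure lborel {0..1}) = 1 - (1 - \<phi>) / (1 - \<gamma>)"
      using assms by (intro integral_uniform_ge) auto
    then show ?thesis
      unfolding mix using False assms by (simp add: step_def integral_uniform_one) (simp add: q01_def min_def field_simps)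
  qed
qed

lemma integral_step_True_eq_q11:
  assumes "0 < \<phi>" "\<phi> < 1" "0 < \<gamma>" "\<gamma> < 1" "\<phi> + \<gamma> \<ge> 1" "0 \<le> \<theta>" "\<theta> \<le> 1"
  shows "(\<integral>c. of_bool (step \<phi> \<gamma> True (fst c) (snd c)) \<partial>coord_meas \<theta>) = q11 \<phi> \<gamma> \<theta>"
proof -
  have mix: "(\<integral>c. of_bool (step \<phi> \<gamma> True (fst c) (snd c)) \<partial>coord_meas \<theta>) =
    \<theta> * (\<integral>u. of_bool (step \<phi> \<gamma> True True u) \<partial>uniform_measure lborel {0..1::real})
    + (1 - \<theta>) * (\<integral>u. of_bool (step \<phi> \<gamma> True False u) \<partial>uniform_measure lborel {0..1::real})"
    using integral_coord_meas_of_bool[OF assms(6,7) measurable_step] by simp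
  have "(1 - \<phi>) / \<gamma> \<le> 1"
    using assms by (simp add: divide_le_eq_1)
  then have switch: "(\<integral>u. of_bool ((1 - \<phi>) / \<gamma> \<le> u) \<partial>uniform_measure lborel {0..1}) = 1 - (1 - \<phi>) / \<gamma>"
    using assms by (intro integral_uniform_ge) auto
  show ?thesis
  proof (cases "\<phi> \<le> \<gamma>")
    case True
    then have "(\<integral>u. of_bool (\<not> \<phi> / \<gamma> \<le> u) \<partial>uniform_measure lborel {0..1}) = \<phi> / \<gamma>"
      using assms by (intro integral_uniform_less) auto
    then show ?thesis
      unfolding mix using True assms switch by (simp add: step_def) (simp add: q11_def min_def field_simps)
  next
    case False
    then show ?thesis
      unfolding mix using assms switch
      by (simp add: step_def integral_uniform_one) (simp add: q11_def min_def field_simps)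
  qed
qed

lemma cnt01_eq_sum:
  "real (cnt01 \<phi> \<gamma> x N \<omega>) = (\<Sum>k\<in>{k \<in> {..<N}. \<not> x k}. of_bool (step \<phi> \<gamma> False (fst (\<omega> k)) (snd (\<omega> k))))"
proof -
  have "{k \<in> {..<N}. \<not> x k \<and> step \<phi> \<gamma> (x k) (fst (\<omega> k)) (snd (\<omega> k))}
      = {k \<in> {..<N}. \<not> x k} \<inter> {k. step \<phi> \<gamma> False (fst (\<omega> k)) (snd (\<omega> k))}"
    by auto
  then show ?thesis
    by (simp add: cnt01_def)
qed

lemma cnt11_eq_sum:
  "real (cnt11 \<phi> \<gamma> x N \<omega>) = (\<Sum>k\<in>{k \<in> {..<N}. x k}. of_bool (step \<phi> \<gamma> True (fst (\<omega> k)) (snd (\<omega> k))))"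
proof -
  have "{k \<in> {..<N}. x k \<and> step \<phi> \<gamma> (x k) (fst (\<omega> k)) (snd (\<omega> k))}
      = {k \<in> {..<N}. x k} \<inter> {k. step \<phi> \<gamma> True (fst (\<omega> k)) (snd (\<omega> k))}"
    by auto
  then show ?thesis
    by (simp add: cnt11_def)
qed

lemma distr_V01_V11:
  "distr (trans_space \<theta> N) borel (\<lambda>\<omega>. (V01 \<phi> \<gamma> \<theta> x N \<omega>, V11 \<phi> \<gamma> \<theta> x N \<omega>))
    = distr (PiM UNIV (\<lambda>_::nat. coord_meas \<theta>)) borel
        (normalized_count (\<lambda>c. step \<phi> \<gamma> False (fst c) (snd c)) (q01 \<phi> \<gamma> \<theta>) (cnt0 x N))
      \<Otimes>\<^sub>M distr (PiM UNIV (\<lambda>_::nat. coord_meas \<theta>)) borel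
        (normalized_count (\<lambda>c. step \<phi> \<gamma> True (fst c) (snd c)) (q11 \<phi> \<gamma> \<theta>) (cnt1 x N))"
  (is "_ = ?rhs")
proof -
  define A where "A = {k \<in> {..<N}. \<not> x k}"
  define B where "B = {k \<in> {..<N}. x k}"
  define h where "h q m s = (s - real m * q) / sqrt (real m)" for q :: real and m :: nat and s :: real
  have [measurable]: "h q m \<in> borel_measurable borel" for q m
    unfolding h_def by measurable
  have V: "V01 \<phi> \<gamma> \<theta> x N \<omega>
      = h (q01 \<phi> \<gamma> \<theta>) (card A) (\<Sum>k\<in>A. of_bool (step \<phi> \<gamma> False (fst (\<omega> k)) (snd (\<omega> k))))"
    "V11 \<phi> \<gamma> \<theta> x N \<omega>
      = h (q11 \<phi> \<gamma> \<theta>) (card B) (\<Sum>k\<in>B. of_bool (step \<phi> \<gamma> True (fst (\<omega> k)) (snd (\<omega> k))))" for \<omega>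
    unfolding V01_def V11_def cnt01_eq_sum cnt11_eq_sum h_def A_def B_def cnt0_def cnt1_def
    by (simp_all del: sum_of_bool_eq)
  have blocks: "A \<subseteq> {..<N}" "B \<subseteq> {..<N}" "A \<inter> B = {}"
    unfolding A_def B_def by auto
  have block_law: "distr (PiM {..<N} (\<lambda>_. coord_meas \<theta>)) borel (\<lambda>\<omega>. h q (card S) (\<Sum>k\<in>S. of_bool (P (\<omega> k))))
      = distr (PiM UNIV (\<lambda>_::nat. coord_meas \<theta>)) borel (normalized_count P q (card S))"
    if "S \<subseteq> {..<N}" and [measurable]: "Measurable.pred (coord_meas \<theta>) P" for S P q
    using distr_PiM_block_sum[OF prob_space_coord_meas,
        where f="\<lambda>c. of_bool (P c)" and h="h q (card S)" and A=S and I="{..<N}"]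
      that finite_subset[OF that(1)]
    unfolding normalized_count_def[abs_def] h_def by (simp del: sum_of_bool_eq)
  have "distr (trans_space \<theta> N) borel (\<lambda>\<omega>. (V01 \<phi> \<gamma> \<theta> x N \<omega>, V11 \<phi> \<gamma> \<theta> x N \<omega>))
      = distr (PiM {..<N} (\<lambda>_. coord_meas \<theta>)) borel
          (\<lambda>\<omega>. h (q01 \<phi> \<gamma> \<theta>) (card A) (\<Sum>k\<in>A. of_bool (step \<phi> \<gamma> False (fst (\<omega> k)) (snd (\<omega> k)))))
        \<Otimes>\<^sub>M distr (PiM {..<N} (\<lambda>_. coord_meas \<theta>)) borel
          (\<lambda>\<omega>. h (q11 \<phi> \<gamma> \<theta>) (card B) (\<Sum>k\<in>B. of_bool (step \<phi> \<gamma> True (fst (\<omega> k)) (snd (\<omega> k)))))"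
    unfolding V trans_space_def using blocks
    by (intro distr_PiM_disjoint_block_sums prob_space_coord_meas) measurable
  also have "\<dots> = ?rhs"
    using block_law[OF blocks(1) measurable_step] block_law[OF blocks(2) measurable_step]
    by (simp add: A_def B_def cnt0_def cnt1_def del: sum_of_bool_eq)
  finally show ?thesis .
qed

theorem proposition9:
  fixes \<phi> \<gamma> \<theta> :: real and N :: "nat \<Rightarrow> nat" and x :: "nat \<Rightarrow> nat \<Rightarrow> bool"
  assumes "0 < \<phi>" "\<phi> < 1" "0 < \<gamma>" "\<gamma> < 1" "\<phi> + \<gamma> \<ge> 1"
    and "0 \<le> \<theta>" "\<theta> \<le> 1"
    and "filterlim (\<lambda>n. cnt0 (x n) (N n)) at_top sequentially"
    and "filterlim (\<lambda>n. cnt1 (x n) (N n)) at_top sequentially"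
  shows "weak_conv_meas
           (\<lambda>n. distr (trans_space \<theta> (N n)) borel
                  (\<lambda>\<omega>. (V01 \<phi> \<gamma> \<theta> (x n) (N n) \<omega>, V11 \<phi> \<gamma> \<theta> (x n) (N n) \<omega>)))
           (normal_meas 0 (q01 \<phi> \<gamma> \<theta> * (1 - q01 \<phi> \<gamma> \<theta>))
              \<Otimes>\<^sub>M normal_meas 0 (q11 \<phi> \<gamma> \<theta> * (1 - q11 \<phi> \<gamma> \<theta>)))"
proof -
  let ?law = "\<lambda>b q m. distr (PiM UNIV (\<lambda>_::nat. coord_meas \<theta>)) borel
    (normalized_count (\<lambda>c. step \<phi> \<gamma> b (fst c) (snd c)) q m)"
  have laws: "real_distribution (?law b q m)" for b q m
    by (intro prob_space.real_distribution_distr prob_space_PiM prob_space_coord_meas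
        measurable_normalized_count measurable_step)
  have limit: "weak_conv_m (\<lambda>n. ?law b q (r n)) (normal_meas 0 (q * (1 - q)))"
    and normal: "real_distribution (normal_meas 0 (q * (1 - q)))"
    if "q = (\<integral>c. of_bool (step \<phi> \<gamma> b (fst c) (snd c)) \<partial>coord_meas \<theta>)"
      and "filterlim r at_top sequentially" for b q and r :: "nat \<Rightarrow> nat"
  proof -
    show "weak_conv_m (\<lambda>n. ?law b q (r n)) (normal_meas 0 (q * (1 - q)))"
      using weak_conv_m_normalized_count[OF prob_space_coord_meas measurable_step that(1)] that(2)
      by (rule weak_conv_m_reindex)
    show "real_distribution (normal_meas 0 (q * (1 - q)))"
      unfolding that(1)
      by (intro real_distribution_normal_meas prob_space.expectation_of_bool_mult_compl_nonneg
          prob_space_coord_meas measurable_step)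
  qed
  have q01: "q01 \<phi> \<gamma> \<theta> = (\<integral>c. of_bool (step \<phi> \<gamma> False (fst c) (snd c)) \<partial>coord_meas \<theta>)"
    using integral_step_False_eq_q01[OF assms(1-4,6,7)] by simp
  have q11: "q11 \<phi> \<gamma> \<theta> = (\<integral>c. of_bool (step \<phi> \<gamma> True (fst c) (snd c)) \<partial>coord_meas \<theta>)"
    using integral_step_True_eq_q11[OF assms(1-7)] by simp
  show ?thesis
    unfolding distr_V01_V11
    by (intro weak_conv_meas_pair_measure laws limit[OF q01 assms(8)] limit[OF q11 assms(9)]
        normal[OF q01 assms(8)] normal[OF q11 assms(9)])
qed

end
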